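(* Let $(\Omega,\mathcal F,\mathbb P)$ be a probability space, $V,U$ Banach spaces, and $X:[0,T]\times\Omega\to V$ a càdlàg stochastic process such that, for some $p\ge1$, $\|X(\omega)\|_{p\text{-var};[0,T]}<\infty$ for almost every $\omega$. Let $n:=\lfloor p\rfloor$ and $F\in\mathcal C^{n+1}_b(V,U)$. Then for almost every $\omega\in\Omega$, the RRS limit $\int_0^TDF(X_t)\,d\mathbb X_t:=\mathrm{RRS}\text{-}\lim_\Pi\sum_{[t_i,t_{i+1}]\in\Pi}\sum_{k=1}^n\frac1{k!}D^kF(X_{t_i})(X_{t_{i+1}}-X_{t_i})^{\otimes k}$ exists and $$F(X_T)-F(X_0)=\int_0^TDF(X_t)\,d\mathbb X_t+\sum_{0<t\le T}\Big(F(X_t)-F(X_{t-})-\sum_{k=1}^n\frac1{k!}D^kF(X_{t-})(\Delta^-_tX)^{\otimes k}\Big),$$ the series converging absolutely.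
   Context: Tensor powers carry norms with $\|a\otimes b\|=\|a\|\|b\|$ (e.g. $V$ finite-dimensional). $\|X\|_{p\text{-var};[0,T]}:=(\sup_\Pi\sum_{[t_i,t_{i+1}]\in\Pi}\|X_{t_{i+1}}-X_{t_i}\|^p)^{1/p}$ over partitions of $[0,T]$. $X_{t-}:=\lim_{u\uparrow t}X_u$, $\Delta^-_tX:=X_t-X_{t-}$. $\mathcal C^k_b(V,U)$: $k$ times continuously differentiable maps with all derivatives up to order $k$ bounded. RRS convergence: sums $S(\Pi)$ converge to $K$ if for every $\varepsilon>0$ there is a partition $\Pi_\varepsilon$ with $\|S(\Pi)-K\|<\varepsilon$ for every partition $\Pi\supset\Pi_\varepsilon$. *)

theory Defs
  imports "HOL-Probability.Probability"
begin

definition is_partition :: "real \<Rightarrow> real \<Rightarrow> real set \<Rightarrow> bool" where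
  "is_partition a b P \<longleftrightarrow> finite P \<and> P \<subseteq> {a..b} \<and> a \<in> P \<and> b \<in> P"

text \<open>Successor of a partition point t (for t not the right endpoint).\<close>
definition nxt :: "real set \<Rightarrow> real \<Rightarrow> real" where
  "nxt P t = Min {s \<in> P. s > t}"

definition psum :: "real \<Rightarrow> real set \<Rightarrow> (real \<Rightarrow> real \<Rightarrow> 'b::comm_monoid_add) \<Rightarrow> 'b" where
  "psum b P g = (\<Sum>t\<in>P - {b}. g t (nxt P t))"

definition finite_p_var :: "real \<Rightarrow> real \<Rightarrow> real \<Rightarrow> (real \<Rightarrow> 'v::real_normed_vector) \<Rightarrow> bool" where
  "finite_p_var p a b f \<longleftrightarrow>
     bdd_above {psum b P (\<lambda>s t. norm (f t - f s) powr p) | P. is_partition a b P}"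

definition cadlag_on :: "real \<Rightarrow> real \<Rightarrow> (real \<Rightarrow> 'v::topological_space) \<Rightarrow> bool" where
  "cadlag_on a b f \<longleftrightarrow> (\<forall>t\<in>{a..<b}. continuous (at_right t) f)
                       \<and> (\<forall>t\<in>{a<..b}. \<exists>l. (f \<longlongrightarrow> l) (at_left t))"

definition left_lim :: "(real \<Rightarrow> 'v::t2_space) \<Rightarrow> real \<Rightarrow> 'v" where
  "left_lim f t = Lim (at_left t) f"

definition rrs_converges :: "real \<Rightarrow> real \<Rightarrow> (real set \<Rightarrow> 'u::real_normed_vector) \<Rightarrow> 'u \<Rightarrow> bool" where
  "rrs_converges a b S K \<longleftrightarrow>
     (\<forall>e>0. \<exists>Pe. is_partition a b Pe \<and>
        (\<forall>P. is_partition a b P \<and> Pe \<subseteq> P \<longrightarrow> norm (S P - K) < e))"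

text \<open>Iterated Frechet derivative: iter_deriv F [h1,...,hk] x = D^k F(x)(h1,...,hk).\<close>
fun iter_deriv :: "('v::real_normed_vector \<Rightarrow> 'u::real_normed_vector) \<Rightarrow> 'v list \<Rightarrow> 'v \<Rightarrow> 'u" where
  "iter_deriv F [] = F"
| "iter_deriv F (h # hs) = (\<lambda>x. frechet_derivative (iter_deriv F hs) (at x) h)"

text \<open>C^m_b: m times continuously (Frechet) differentiable, with F and all derivatives
  up to order m bounded (as multilinear maps, operator norm), D^k F continuous in operator norm.\<close>
definition Cb :: "nat \<Rightarrow> ('v::real_normed_vector \<Rightarrow> 'u::real_normed_vector) \<Rightarrow> bool" where
  "Cb m F \<longleftrightarrow>
     (\<forall>hs x. length hs < m \<longrightarrow> iter_deriv F hs differentiable (at x)) \<and>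
     (\<exists>C. \<forall>hs x. length hs \<le> m \<longrightarrow> norm (iter_deriv F hs x) \<le> C * prod_list (map norm hs)) \<and>
     (\<forall>x. \<forall>e>0. \<exists>d>0. \<forall>y hs. length hs \<le> m \<and> dist y x < d \<longrightarrow>
          norm (iter_deriv F hs y - iter_deriv F hs x) \<le> e * prod_list (map norm hs))"

definition taylor_incr :: "nat \<Rightarrow> ('v::real_normed_vector \<Rightarrow> 'u::real_normed_vector) \<Rightarrow> 'v \<Rightarrow> 'v \<Rightarrow> 'u" where
  "taylor_incr n F x h = (\<Sum>k=1..n. (1 / fact k) *\<^sub>R iter_deriv F (replicate k h) x)"

end

theory Submission
  imports Defs
begin

(*
  Write F y - F x as the Taylor increment of order n plus a remainder R x y with
  norm (R x y) <= C * norm (y - x) powr q, where q = n + 1 > p.  Over a partition the left-hand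
  sides telescope, so it suffices that the partition sums of R (X s) (X t) RRS-converge to the
  sum of the jump remainders R (X (t-)) (X t).

  Given theta > 0, a cadlag path admits a finite partition B such that X oscillates by less than
  theta/2 between consecutive points of B; every jump larger than theta lies in B.  On a partition
  refining B, an interval that does not end at such a big jump carries an increment of size at most
  2 theta, so these remainders add up to at most C (2 theta)^(q - p) times the p-variation; the
  small jumps obey the same bound.  An interval ending at a big jump tau can be forced to start
  arbitrarily close to tau, and continuity of R in its first argument makes its remainder close to
  the jump remainder at tau.
*)

lemma iter_deriv_bound_nonneg:
  assumes "\<forall>hs x. length hs \<le> m \<longrightarrow> norm (iter_deriv F hs x) \<le> C * prod_list (map norm hs)"
  shows "C \<ge> 0"
proof -
  have "norm (F x) \<le> C" for x
    using assms[rule_format, of "[]" x] by simp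
  then show ?thesis by (meson norm_ge_zero order_trans)
qed

lemma iter_deriv_update_diff:
  assumes D: "\<forall>hs x. length hs < m \<longrightarrow> iter_deriv F hs differentiable (at x)"
  shows "length hs \<le> m \<Longrightarrow> i < length hs \<Longrightarrow>
    iter_deriv F (hs[i := a - b]) = (\<lambda>x. iter_deriv F (hs[i := a]) x - iter_deriv F (hs[i := b]) x)"
proof (induction hs arbitrary: i)
  case Nil
  then show ?case by simp
next
  case (Cons h hs)
  show ?case
  proof (cases i)
    case 0
    have "linear (frechet_derivative (iter_deriv F hs) (at x))" for x
      using D Cons.prems by (auto intro!: linear_frechet_derivative)
    then show ?thesis using 0 by (auto simp: linear_diff)
  next
    case (Suc j)
    have IH: "iter_deriv F (hs[j := a - b]) = (\<lambda>x. iter_deriv F (hs[j := a]) x - iter_deriv F (hs[j := b]) x)"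
      using Cons Suc by auto
    have "(iter_deriv F (hs[j := c]) has_derivative frechet_derivative (iter_deriv F (hs[j := c])) (at x)) (at x)"
      for c x using D[rule_format, of "hs[j := c]" x] Cons.prems by (simp flip: frechet_derivative_works)
    then have "frechet_derivative (\<lambda>x. iter_deriv F (hs[j := a]) x - iter_deriv F (hs[j := b]) x) (at x)
        = (\<lambda>v. frechet_derivative (iter_deriv F (hs[j := a])) (at x) v
             - frechet_derivative (iter_deriv F (hs[j := b])) (at x) v)" for x
      by (intro frechet_derivative_at[symmetric] has_derivative_diff)
    then show ?thesis using Suc IH by auto
  qed
qed

lemma iter_deriv_replicate_diff_le:
  assumes D: "\<forall>hs x. length hs < m \<longrightarrow> iter_deriv F hs differentiable (at x)"
    and C: "\<forall>hs x. length hs \<le> m \<longrightarrow> norm (iter_deriv F hs x) \<le> C * prod_list (map norm hs)"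
    and "k \<le> m" and "norm h \<le> M" "norm h0 \<le> M"
  shows "norm (iter_deriv F (replicate k h) x - iter_deriv F (replicate k h0) x)
     \<le> real k * (C * M ^ (k - 1) * norm (h - h0))"
proof -
  \<comment> \<open>Switch the slots from h0 to h one at a time; each switch is linear in a single slot.\<close>
  define L where "L j = replicate j h @ replicate (k - j) h0" for j
  have "C \<ge> 0" using C by (rule iter_deriv_bound_nonneg)
  have "M \<ge> 0" using assms(4) norm_ge_zero order_trans by blast
  have step: "norm (iter_deriv F (L (Suc j)) x - iter_deriv F (L j) x) \<le> C * M ^ (k - 1) * norm (h - h0)"
    if "j < k" for j
  proof -
    define G where "G = replicate j h @ h0 # replicate (k - Suc j) h0"
    have len: "length G = k" using \<open>j < k\<close> by (simp add: G_def)
    have "L j = G" using \<open>j < k\<close> by (simp add: L_def G_def Suc_diff_Suc flip: replicate_Suc)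
    moreover have "L (Suc j) = G[j := h]"
    proof -
      have "replicate (Suc j) h = replicate j h @ [h]" by (simp add: replicate_append_same)
      then show ?thesis by (simp add: L_def G_def list_update_append del: replicate_Suc)
    qed
    moreover have "G[j := h0] = G" by (simp add: G_def list_update_append)
    ultimately have eq: "iter_deriv F (L (Suc j)) x - iter_deriv F (L j) x = iter_deriv F (G[j := h - h0]) x"
      using iter_deriv_update_diff[OF D, of G j h h0] len assms(3) \<open>j < k\<close> by auto
    have "prod_list (map norm (G[j := h - h0])) = norm h ^ j * (norm (h - h0) * norm h0 ^ (k - Suc j))"
      by (simp add: G_def list_update_append prod_list_replicate)
    also have "\<dots> \<le> M ^ j * (norm (h - h0) * M ^ (k - Suc j))"
      using assms(4,5) \<open>M \<ge> 0\<close> by (intro mult_mono power_mono mult_nonneg_nonneg) auto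
    also have "\<dots> = M ^ (k - 1) * norm (h - h0)"
      using \<open>j < k\<close> by (simp add: power_add[symmetric])
    finally have "C * prod_list (map norm (G[j := h - h0])) \<le> C * (M ^ (k - 1) * norm (h - h0))"
      using \<open>C \<ge> 0\<close> by (rule mult_left_mono)
    moreover have "norm (iter_deriv F (G[j := h - h0]) x) \<le> C * prod_list (map norm (G[j := h - h0]))"
      using C len assms(3) by simp
    ultimately show ?thesis using eq by (simp add: mult.assoc)
  qed
  have "iter_deriv F (replicate k h) x - iter_deriv F (replicate k h0) x
      = (\<Sum>j<k. iter_deriv F (L (Suc j)) x - iter_deriv F (L j) x)"
    by (subst sum_lessThan_telescope) (simp add: L_def)
  also have "norm \<dots> \<le> (\<Sum>j<k. C * M ^ (k - 1) * norm (h - h0))"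
    using step by (intro sum_norm_le) auto
  finally show ?thesis by simp
qed

lemma iter_deriv_has_vector_derivative_line:
  assumes "iter_deriv F hs differentiable (at (x + t *\<^sub>R h))"
  shows "((\<lambda>t. iter_deriv F hs (x + t *\<^sub>R h)) has_vector_derivative iter_deriv F (h # hs) (x + t *\<^sub>R h))
           (at t within S)"
proof -
  let ?D = "frechet_derivative (iter_deriv F hs) (at (x + t *\<^sub>R h))"
  have "((\<lambda>t. x + t *\<^sub>R h) has_derivative (\<lambda>s. s *\<^sub>R h)) (at t within S)"
    by (auto intro!: derivative_eq_intros)
  moreover have "(iter_deriv F hs has_derivative ?D) (at (x + t *\<^sub>R h))"
    using assms frechet_derivative_works by blast
  ultimately have "((\<lambda>t. iter_deriv F hs (x + t *\<^sub>R h)) has_derivative (\<lambda>s. ?D (s *\<^sub>R h))) (at t within S)"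
    by (rule has_derivative_compose)
  moreover have "?D (s *\<^sub>R h) = s *\<^sub>R ?D h" for s
    using linear_scale[OF linear_frechet_derivative[OF assms]] .
  ultimately show ?thesis by (simp add: has_vector_derivative_def)
qed

definition taylor_rem :: "nat \<Rightarrow> ('v::real_normed_vector \<Rightarrow> 'u::real_normed_vector) \<Rightarrow> 'v \<Rightarrow> 'v \<Rightarrow> 'u" where
  "taylor_rem n F x y = F y - F x - taylor_incr n F x (y - x)"

lemma taylor_rem_le:
  fixes F :: "'v::real_normed_vector \<Rightarrow> 'u::banach"
  assumes D: "\<forall>hs x. length hs < Suc n \<longrightarrow> iter_deriv F hs differentiable (at x)"
    and C: "\<forall>hs x. length hs \<le> Suc n \<longrightarrow> norm (iter_deriv F hs x) \<le> C * prod_list (map norm hs)"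
  shows "norm (taylor_rem n F x y) \<le> C / fact n * norm (y - x) ^ Suc n"
proof -
  define h where "h = y - x"
  define Df where "Df i t = iter_deriv F (replicate i h) (x + t *\<^sub>R h)" for i t
  have "(Df m has_vector_derivative Df (Suc m) t) (at t within {0..1})" if "m < Suc n" for m t
    unfolding Df_def using iter_deriv_has_vector_derivative_line[of F "replicate m h" x t h] D that
    by auto
  then have "((\<lambda>t. ((1 - t) ^ (Suc n - 1) / fact (Suc n - 1)) *\<^sub>R Df (Suc n) t) has_integral
      Df 0 1 - (\<Sum>i<Suc n. ((1 - 0) ^ i / fact i) *\<^sub>R Df i 0)) {0..1}"
    by (intro Taylor_has_integral) auto
  moreover have "(\<Sum>i<Suc n. ((1 - 0) ^ i / fact i) *\<^sub>R Df i 0) = F x + taylor_incr n F x h"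
    by (simp add: lessThan_Suc_atMost atMost_atLeast0 sum.atLeast_Suc_atMost Df_def taylor_incr_def)
  ultimately have integral:
    "((\<lambda>t. ((1 - t) ^ n / fact n) *\<^sub>R Df (Suc n) t) has_integral taylor_rem n F x y) (cbox 0 1)"
    by (simp add: taylor_rem_def Df_def h_def algebra_simps)
  have integrand_le: "norm (((1 - t) ^ n / fact n) *\<^sub>R Df (Suc n) t) \<le> C / fact n * norm h ^ Suc n"
    if "t \<in> cbox 0 1" for t
  proof -
    have "\<bar>(1 - t) ^ n / fact n\<bar> \<le> 1 / fact n"
      using that by (auto simp: power_abs intro!: divide_right_mono power_le_one)
    moreover have "norm (Df (Suc n) t) \<le> C * norm h ^ Suc n"
      using C[rule_format, of "replicate (Suc n) h" "x + t *\<^sub>R h"]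
      by (simp add: Df_def prod_list_replicate del: replicate_Suc)
    ultimately have "\<bar>(1 - t) ^ n / fact n\<bar> * norm (Df (Suc n) t) \<le> 1 / fact n * (C * norm h ^ Suc n)"
      by (intro mult_mono) auto
    then show ?thesis by simp
  qed
  have "C \<ge> 0" using C by (rule iter_deriv_bound_nonneg)
  then show ?thesis
    using has_integral_bound[OF _ integral integrand_le] by (simp add: h_def)
qed

lemma iter_deriv_replicate_tendsto_uniform:
  assumes U: "\<forall>x. \<forall>e>0. \<exists>d>0. \<forall>y hs. length hs \<le> m \<and> dist y x < d \<longrightarrow>
          norm (iter_deriv F hs y - iter_deriv F hs x) \<le> e * prod_list (map norm hs)"
    and "k \<le> m" and bounded: "\<forall>\<^sub>F x in at x0. norm (h x) \<le> M"
  shows "((\<lambda>x. iter_deriv F (replicate k (h x)) x - iter_deriv F (replicate k (h x)) x0) \<longlongrightarrow> 0) (at x0)"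
proof (rule tendstoI)
  fix e :: real assume "e > 0"
  define M' where "M' = max M 0"
  have "M' ^ k + 1 > 0" by (simp add: M'_def add_nonneg_pos)
  then have "e / (M' ^ k + 1) > 0" using \<open>e > 0\<close> by simp
  with U obtain d where "d > 0" and d: "\<And>x hs. length hs \<le> m \<Longrightarrow> dist x x0 < d \<Longrightarrow>
      norm (iter_deriv F hs x - iter_deriv F hs x0) \<le> e / (M' ^ k + 1) * prod_list (map norm hs)"
    by meson
  have "\<forall>\<^sub>F x in at x0. dist x x0 < d" using \<open>d > 0\<close> by (auto simp: eventually_at)
  with bounded show "\<forall>\<^sub>F x in at x0. dist (iter_deriv F (replicate k (h x)) x
      - iter_deriv F (replicate k (h x)) x0) 0 < e"
  proof eventually_elim
    case (elim x)
    have "norm (iter_deriv F (replicate k (h x)) x - iter_deriv F (replicate k (h x)) x0)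
        \<le> e / (M' ^ k + 1) * norm (h x) ^ k"
      using d[of "replicate k (h x)" x] \<open>k \<le> m\<close> elim by (simp add: prod_list_replicate)
    also have "\<dots> \<le> e / (M' ^ k + 1) * M' ^ k"
      using elim \<open>e / (M' ^ k + 1) > 0\<close> by (intro mult_left_mono power_mono) (auto simp: M'_def)
    also have "\<dots> < e"
      using \<open>e > 0\<close> \<open>M' ^ k + 1 > 0\<close> by (simp add: field_simps)
    finally show ?case by simp
  qed
qed

lemma iter_deriv_replicate_isCont:
  assumes D: "\<forall>hs x. length hs < m \<longrightarrow> iter_deriv F hs differentiable (at x)"
    and C: "\<forall>hs x. length hs \<le> m \<longrightarrow> norm (iter_deriv F hs x) \<le> C * prod_list (map norm hs)"
    and U: "\<forall>x. \<forall>e>0. \<exists>d>0. \<forall>y hs. length hs \<le> m \<and> dist y x < d \<longrightarrow>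
          norm (iter_deriv F hs y - iter_deriv F hs x) \<le> e * prod_list (map norm hs)"
    and "k \<le> m"
  shows "isCont (\<lambda>x. iter_deriv F (replicate k (y - x)) x) x0"
proof -
  define M where "M = norm (y - x0) + 1"
  have M: "norm (y - x) \<le> M" if "dist x x0 < 1" for x
    using that norm_triangle_ineq2[of "y - x" "y - x0"] by (simp add: M_def dist_norm norm_minus_commute)
  have near: "\<forall>\<^sub>F x in at x0. dist x x0 < 1" by (auto simp: eventually_at intro!: exI[of _ 1])
  have moving_point:
    "((\<lambda>x. iter_deriv F (replicate k (y - x)) x - iter_deriv F (replicate k (y - x)) x0) \<longlongrightarrow> 0) (at x0)"
  proof (rule iter_deriv_replicate_tendsto_uniform[OF U \<open>k \<le> m\<close>])
    show "\<forall>\<^sub>F x in at x0. norm (y - x) \<le> M" using near by (rule eventually_mono) (rule M)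
  qed
  have moving_direction:
    "((\<lambda>x. iter_deriv F (replicate k (y - x)) x0 - iter_deriv F (replicate k (y - x0)) x0) \<longlongrightarrow> 0) (at x0)"
  proof (rule Lim_null_comparison)
    show "\<forall>\<^sub>F x in at x0. norm (iter_deriv F (replicate k (y - x)) x0 - iter_deriv F (replicate k (y - x0)) x0)
        \<le> real k * (C * M ^ (k - 1) * dist x x0)"
      using near
    proof eventually_elim
      case (elim x)
      show ?case
        using iter_deriv_replicate_diff_le[OF D C \<open>k \<le> m\<close> M[OF elim] M[of x0], of x0]
        by (simp add: dist_norm norm_minus_commute)
    qed
    show "((\<lambda>x. real k * (C * M ^ (k - 1) * dist x x0)) \<longlongrightarrow> 0) (at x0)"
      by (auto intro!: tendsto_eq_intros)
  qed
  show ?thesis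
    using tendsto_add[OF moving_point moving_direction] by (simp add: isCont_def LIM_zero_iff)
qed

lemma Cb_taylor_rem_le:
  fixes F :: "'v::real_normed_vector \<Rightarrow> 'u::banach"
  assumes "Cb (Suc n) F"
  obtains C where "C \<ge> 0" "\<And>x y. norm (taylor_rem n F x y) \<le> C * norm (y - x) powr Suc n"
proof -
  obtain C where D: "\<forall>hs x. length hs < Suc n \<longrightarrow> iter_deriv F hs differentiable (at x)"
    and C: "\<forall>hs x. length hs \<le> Suc n \<longrightarrow> norm (iter_deriv F hs x) \<le> C * prod_list (map norm hs)"
    using assms unfolding Cb_def by blast
  have "norm (taylor_rem n F x y) \<le> C / fact n * norm (y - x) powr Suc n" for x y
  proof (cases "x = y")
    case True
    then show ?thesis using taylor_rem_le[OF D C, of x y] by simp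
  next
    case False
    then have "norm (y - x) powr Suc n = norm (y - x) ^ Suc n" by (intro powr_realpow) auto
    then show ?thesis using taylor_rem_le[OF D C, of x y] by simp
  qed
  moreover have "C / fact n \<ge> 0" using iter_deriv_bound_nonneg[OF C] by simp
  ultimately show thesis using that by blast
qed

lemma Cb_taylor_rem_isCont:
  fixes F :: "'v::real_normed_vector \<Rightarrow> 'u::banach"
  assumes "Cb (Suc n) F"
  shows "isCont (\<lambda>x. taylor_rem n F x y) x0"
proof -
  obtain C where D: "\<forall>hs x. length hs < Suc n \<longrightarrow> iter_deriv F hs differentiable (at x)"
    and C: "\<forall>hs x. length hs \<le> Suc n \<longrightarrow> norm (iter_deriv F hs x) \<le> C * prod_list (map norm hs)"
    and U: "\<forall>x. \<forall>e>0. \<exists>d>0. \<forall>y hs. length hs \<le> Suc n \<and> dist y x < d \<longrightarrow>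
          norm (iter_deriv F hs y - iter_deriv F hs x) \<le> e * prod_list (map norm hs)"
    using assms unfolding Cb_def by blast
  have "isCont F x0"
    using D[rule_format, of "[]" x0] by (simp add: differentiable_imp_continuous_within)
  moreover have "isCont (\<lambda>x. iter_deriv F (replicate k (y - x)) x) x0" if "k \<in> {1..n}" for k
    using iter_deriv_replicate_isCont[OF D C U] that by simp
  ultimately show ?thesis
    unfolding taylor_rem_def taylor_incr_def by (intro continuous_intros) auto
qed

definition prv :: "real set \<Rightarrow> real \<Rightarrow> real" where
  "prv P u = Max {s \<in> P. s < u}"

lemma
  assumes "is_partition a b P" and "t \<in> P" "t \<noteq> b"
  shows nxt_mem: "nxt P t \<in> P" and nxt_gt: "t < nxt P t"
    and nxt_least: "s \<in> P \<Longrightarrow> t < s \<Longrightarrow> nxt P t \<le> s"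
proof -
  have "finite {s \<in> P. s > t}" "b \<in> {s \<in> P. s > t}"
    using assms unfolding is_partition_def by auto
  then show "nxt P t \<in> P" "t < nxt P t" "s \<in> P \<Longrightarrow> t < s \<Longrightarrow> nxt P t \<le> s"
    using Min_in Min_le unfolding nxt_def by fastforce+
qed

lemma
  assumes "is_partition a b P" and "u \<in> P" "u \<noteq> a"
  shows prv_mem: "prv P u \<in> P" and prv_less: "prv P u < u"
    and prv_greatest: "s \<in> P \<Longrightarrow> s < u \<Longrightarrow> s \<le> prv P u"
proof -
  have "finite {s \<in> P. s < u}" "a \<in> {s \<in> P. s < u}"
    using assms unfolding is_partition_def by auto
  then show "prv P u \<in> P" "prv P u < u" "s \<in> P \<Longrightarrow> s < u \<Longrightarrow> s \<le> prv P u"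
    using Max_in Max_ge unfolding prv_def by fastforce+
qed

lemma prv_nxt:
  assumes "is_partition a b P" and "t \<in> P" "t \<noteq> b"
  shows "prv P (nxt P t) = t"
proof -
  have u: "nxt P t \<in> P" "nxt P t \<noteq> a"
    using assms nxt_mem[OF assms] nxt_gt[OF assms] unfolding is_partition_def by auto
  have "t \<le> prv P (nxt P t)"
    using prv_greatest[OF assms(1) u assms(2) nxt_gt[OF assms]] .
  moreover have "\<not> t < prv P (nxt P t)"
    using nxt_least[OF assms prv_mem[OF assms(1) u]] prv_less[OF assms(1) u] by fastforce
  ultimately show ?thesis by linarith
qed

lemma nxt_prv:
  assumes "is_partition a b P" and "u \<in> P" "u \<noteq> a"
  shows "nxt P (prv P u) = u"
proof -
  have t: "prv P u \<in> P" "prv P u \<noteq> b"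
    using assms prv_mem[OF assms] prv_less[OF assms] unfolding is_partition_def by auto
  have "nxt P (prv P u) \<le> u"
    using nxt_least[OF assms(1) t assms(2) prv_less[OF assms]] .
  moreover have "\<not> nxt P (prv P u) < u"
    using prv_greatest[OF assms nxt_mem[OF assms(1) t]] nxt_gt[OF assms(1) t] by fastforce
  ultimately show ?thesis by linarith
qed

lemma psum_eq_sum_prv:
  assumes "is_partition a b P"
  shows "psum b P g = (\<Sum>u\<in>P - {a}. g (prv P u) u)"
proof -
  have "bij_betw (nxt P) (P - {b}) (P - {a})"
  proof (rule bij_betw_byWitness[where f' = "prv P"])
    show "nxt P ` (P - {b}) \<subseteq> P - {a}"
    proof (rule image_subsetI)
      fix t assume t: "t \<in> P - {b}"
      then have "a \<le> t" using assms unfolding is_partition_def by auto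
      then show "nxt P t \<in> P - {a}" using nxt_mem[OF assms] nxt_gt[OF assms] t by fastforce
    qed
    show "prv P ` (P - {a}) \<subseteq> P - {b}"
    proof (rule image_subsetI)
      fix u assume u: "u \<in> P - {a}"
      then have "u \<le> b" using assms unfolding is_partition_def by auto
      then show "prv P u \<in> P - {b}" using prv_mem[OF assms] prv_less[OF assms] u by fastforce
    qed
  qed (use assms prv_nxt nxt_prv in auto)
  then have "(\<Sum>u\<in>P - {a}. g (prv P u) u) = (\<Sum>t\<in>P - {b}. g (prv P (nxt P t)) (nxt P t))"
    by (rule sum.reindex_bij_betw[symmetric])
  also have "\<dots> = psum b P g"
    unfolding psum_def using assms prv_nxt by (intro sum.cong) auto
  finally show ?thesis by simp
qed

lemma psum_telescope:
  fixes h :: "real \<Rightarrow> 'b::ab_group_add"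
  assumes "is_partition a b P"
  shows "psum b P (\<lambda>s t. h t - h s) = h b - h a"
proof -
  have "finite P" "a \<in> P" "b \<in> P" using assms unfolding is_partition_def by auto
  have "psum b P (\<lambda>s t. h t - h s) = (\<Sum>u\<in>P - {a}. h u) - (\<Sum>t\<in>P - {b}. h t)"
    using psum_eq_sum_prv[OF assms, of "\<lambda>s t. h t"] unfolding psum_def by (simp add: sum_subtractf)
  also have "\<dots> = h b - h a"
    using \<open>finite P\<close> \<open>a \<in> P\<close> \<open>b \<in> P\<close> by (simp add: sum_diff1 algebra_simps)
  finally show ?thesis .
qed

lemma sum_prv_le_psum:
  fixes g :: "real \<Rightarrow> real \<Rightarrow> real"
  assumes "is_partition a b P" and "A \<subseteq> P - {a}" and "\<And>s u. 0 \<le> g s u"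
  shows "(\<Sum>u\<in>A. g (prv P u) u) \<le> psum b P g"
proof -
  have "finite (P - {a})" using assms(1) unfolding is_partition_def by auto
  then have "(\<Sum>u\<in>A. g (prv P u) u) \<le> (\<Sum>u\<in>P - {a}. g (prv P u) u)"
    using assms(2,3) by (intro sum_mono2) auto
  then show ?thesis using psum_eq_sum_prv[OF assms(1), of g] by simp
qed

lemma eventually_at_left_prv:
  assumes "finite A" "A \<subseteq> {a<..b}" "\<And>\<tau>. \<tau> \<in> A \<Longrightarrow> eventually (Q \<tau>) (at_left \<tau>)"
  obtains S where "finite S" "S \<subseteq> {a..b}"
    "\<And>P \<tau>. is_partition a b P \<Longrightarrow> S \<subseteq> P \<Longrightarrow> \<tau> \<in> A \<Longrightarrow> \<tau> \<in> P \<Longrightarrow> Q \<tau> (prv P \<tau>)"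
proof -
  obtain l where l: "\<And>\<tau>. \<tau> \<in> A \<Longrightarrow> l \<tau> < \<tau>"
    and Q: "\<And>\<tau> r. \<tau> \<in> A \<Longrightarrow> l \<tau> < r \<Longrightarrow> r < \<tau> \<Longrightarrow> Q \<tau> r"
    using assms(3) unfolding eventually_at_left_field by metis
  define s where "s \<tau> = (max (l \<tau>) a + \<tau>) / 2" for \<tau>
  have s: "a < s \<tau>" "l \<tau> < s \<tau>" "s \<tau> < \<tau>" if "\<tau> \<in> A" for \<tau>
  proof -
    have "a < \<tau>" using assms(2) that by auto
    then show "a < s \<tau>" "l \<tau> < s \<tau>" "s \<tau> < \<tau>"
      using l[OF that] unfolding s_def by (auto simp: max_def)
  qed
  show thesis
  proof (rule that[of "s ` A"])
    show "finite (s ` A)" using assms(1) by simp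
    have "s \<tau> \<in> {a..b}" if "\<tau> \<in> A" for \<tau>
      using s[OF that] assms(2) that by fastforce
    then show "s ` A \<subseteq> {a..b}" by blast
    fix P \<tau> assume P: "is_partition a b P" "s ` A \<subseteq> P" and \<tau>: "\<tau> \<in> A" "\<tau> \<in> P"
    have "\<tau> \<noteq> a" using \<tau> assms(2) by auto
    have "s \<tau> \<le> prv P \<tau>"
      using prv_greatest[OF P(1) \<tau>(2) \<open>\<tau> \<noteq> a\<close>] P(2) \<tau>(1) s[OF \<tau>(1)] by auto
    moreover have "prv P \<tau> < \<tau>" by (rule prv_less[OF P(1) \<tau>(2) \<open>\<tau> \<noteq> a\<close>])
    ultimately show "Q \<tau> (prv P \<tau>)" using Q[OF \<tau>(1)] s[OF \<tau>(1)] by auto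
  qed
qed

abbreviation jump :: "(real \<Rightarrow> 'v::real_normed_vector) \<Rightarrow> real \<Rightarrow> 'v" where
  "jump f t \<equiv> f t - left_lim f t"

lemma cadlag_tendsto_left_lim:
  assumes "cadlag_on a b f" "t \<in> {a<..b}"
  shows "(f \<longlongrightarrow> left_lim f t) (at_left t)"
proof -
  obtain l where l: "(f \<longlongrightarrow> l) (at_left t)" using assms unfolding cadlag_on_def by blast
  then have "left_lim f t = l" unfolding left_lim_def by (intro tendsto_Lim) auto
  with l show ?thesis by simp
qed

(* f varies by less than e on each cell [t_i, t_(i+1)) of the partition B. *)
definition osc_partition :: "(real \<Rightarrow> 'v::real_normed_vector) \<Rightarrow> real \<Rightarrow> real \<Rightarrow> real \<Rightarrow> real set \<Rightarrow> bool" where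
  "osc_partition f e a b B \<longleftrightarrow> is_partition a b B \<and>
     (\<forall>s r. a \<le> s \<longrightarrow> s \<le> r \<longrightarrow> r \<le> b \<longrightarrow> {s<..r} \<inter> B = {} \<longrightarrow> norm (f r - f s) < e)"

lemma osc_partition_insert:
  assumes "osc_partition f e a c B" "c \<le> d" "e > 0"
    and "\<And>r s. r \<in> {c..<d} \<Longrightarrow> s \<in> {c..<d} \<Longrightarrow> norm (f r - f s) < e"
  shows "osc_partition f e a d (insert d B)"
proof -
  have B: "is_partition a c B"
    and osc: "\<And>s r. a \<le> s \<Longrightarrow> s \<le> r \<Longrightarrow> r \<le> c \<Longrightarrow> {s<..r} \<inter> B = {} \<Longrightarrow> norm (f r - f s) < e"
    using assms(1) unfolding osc_partition_def by auto
  have "norm (f r - f s) < e"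
    if "a \<le> s" "s \<le> r" "r \<le> d" and gap: "{s<..r} \<inter> insert d B = {}" for s r
  proof (cases "r \<le> c")
    case True
    then show ?thesis using osc that by auto
  next
    case False
    have "c \<in> B" using B unfolding is_partition_def by auto
    have "c \<le> s"
    proof (rule ccontr)
      assume "\<not> c \<le> s"
      then have "c \<in> {s<..r} \<inter> insert d B" using \<open>c \<in> B\<close> False by auto
      then show False using gap by blast
    qed
    show ?thesis
    proof (cases "r = d")
      case True
      then have "s = r" using gap \<open>s \<le> r\<close> by fastforce
      then show ?thesis using \<open>e > 0\<close> by simp
    next
      case False
      then show ?thesis using assms(4) \<open>c \<le> s\<close> that by auto
    qed
  qed
  moreover have "is_partition a d (insert d B)"
    using B \<open>c \<le> d\<close> unfolding is_partition_def by auto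
  ultimately show ?thesis unfolding osc_partition_def by blast
qed

lemma osc_partition_singleton:
  assumes "e > 0"
  shows "osc_partition f e a a {a}"
proof -
  have "norm (f r - f s) < e" if "a \<le> s" "s \<le> r" "r \<le> a" for s r
  proof -
    have "s = r" using that by linarith
    then show ?thesis using assms by simp
  qed
  then show ?thesis unfolding osc_partition_def is_partition_def by auto
qed

lemma osc_partition_extend_to_left_limit:
  assumes "cadlag_on a b f" "\<tau> \<in> {a<..b}" "e > 0"
  obtains l where "l < \<tau>"
    "\<And>c B. max l a < c \<Longrightarrow> c \<le> \<tau> \<Longrightarrow> osc_partition f e a c B \<Longrightarrow> osc_partition f e a \<tau> (insert \<tau> B)"
proof -
  from tendstoD[OF cadlag_tendsto_left_lim[OF assms(1,2)], of "e / 2"] \<open>e > 0\<close>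
  obtain l where "l < \<tau>" and l: "\<And>r. l < r \<Longrightarrow> r < \<tau> \<Longrightarrow> dist (f r) (left_lim f \<tau>) < e / 2"
    unfolding eventually_at_left_field by auto
  show thesis
  proof (rule that[OF \<open>l < \<tau>\<close>])
    fix c B assume "max l a < c" "c \<le> \<tau>" "osc_partition f e a c B"
    then show "osc_partition f e a \<tau> (insert \<tau> B)"
    proof (intro osc_partition_insert[OF _ _ \<open>e > 0\<close>])
      fix r s assume "r \<in> {c..<\<tau>}" "s \<in> {c..<\<tau>}"
      then have "dist (f r) (left_lim f \<tau>) < e / 2" "dist (f s) (left_lim f \<tau>) < e / 2"
        using l \<open>max l a < c\<close> by auto
      from dist_triangle_half_l[OF this] show "norm (f r - f s) < e" by (simp add: dist_norm)
    qed
  qed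
qed

lemma osc_partition_extend_right:
  assumes "cadlag_on a b f" "osc_partition f e a \<tau> B" "\<tau> \<in> {a..<b}" "e > 0"
  obtains d where "\<tau> < d" "d \<le> b" "osc_partition f e a d (insert d B)"
proof -
  have "(f \<longlongrightarrow> f \<tau>) (at_right \<tau>)"
    using assms(1,3) unfolding cadlag_on_def continuous_within by auto
  from tendstoD[OF this, of "e / 2"] \<open>e > 0\<close>
  obtain u where "\<tau> < u" and u: "\<And>r. \<tau> < r \<Longrightarrow> r < u \<Longrightarrow> dist (f r) (f \<tau>) < e / 2"
    unfolding eventually_at_right_field by auto
  define d where "d = min ((\<tau> + u) / 2) b"
  have "\<tau> < d" "d < u" "d \<le> b" using \<open>\<tau> < u\<close> assms(3) by (auto simp: d_def min_def)
  have near: "dist (f r) (f \<tau>) < e / 2" if "r \<in> {\<tau>..<d}" for r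
    using that u[of r] \<open>d < u\<close> \<open>e > 0\<close> by (cases "r = \<tau>") auto
  have "osc_partition f e a d (insert d B)"
  proof (rule osc_partition_insert[OF assms(2) _ \<open>e > 0\<close>])
    show "norm (f r - f s) < e" if "r \<in> {\<tau>..<d}" "s \<in> {\<tau>..<d}" for r s
      using dist_triangle_half_l[OF near near] that by (simp add: dist_norm)
  qed (use \<open>\<tau> < d\<close> in simp)
  with \<open>\<tau> < d\<close> \<open>d \<le> b\<close> show thesis by (rule that)
qed

(* Billingsley's lemma: the right endpoints c admitting such a partition of [a, c] contain
   their supremum, and the supremum cannot lie below b. *)
lemma cadlag_osc_partition_exists:
  assumes "cadlag_on a b f" "a \<le> b" "e > 0"
  obtains B where "osc_partition f e a b B"
proof -
  define S where "S = {c \<in> {a..b}. \<exists>B. osc_partition f e a c B}"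
  have "a \<in> S" using osc_partition_singleton[OF \<open>e > 0\<close>] assms(2) by (auto simp: S_def)
  have "bdd_above S" by (auto simp: S_def intro: bdd_aboveI[of _ b])
  define \<tau> where "\<tau> = Sup S"
  have "a \<le> \<tau>" using cSup_upper[OF \<open>a \<in> S\<close> \<open>bdd_above S\<close>] by (simp add: \<tau>_def)
  have "\<tau> \<le> b" using \<open>a \<in> S\<close> unfolding \<tau>_def by (intro cSup_least) (auto simp: S_def)
  have "\<tau> \<in> S"
  proof (cases "\<tau> = a")
    case True
    then show ?thesis using \<open>a \<in> S\<close> by simp
  next
    case False
    then have "\<tau> \<in> {a<..b}" using \<open>a \<le> \<tau>\<close> \<open>\<tau> \<le> b\<close> by auto
    then obtain l where "l < \<tau>" and extend: "\<And>c B. max l a < c \<Longrightarrow> c \<le> \<tau> \<Longrightarrow>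
        osc_partition f e a c B \<Longrightarrow> osc_partition f e a \<tau> (insert \<tau> B)"
      using osc_partition_extend_to_left_limit[OF assms(1) _ \<open>e > 0\<close>] by blast
    have "max l a < \<tau>" using \<open>l < \<tau>\<close> \<open>a \<le> \<tau>\<close> False by auto
    then obtain c where "c \<in> S" "max l a < c"
      using less_cSup_iff[OF _ \<open>bdd_above S\<close>] \<open>a \<in> S\<close> unfolding \<tau>_def by blast
    then obtain B where "osc_partition f e a c B" unfolding S_def by blast
    moreover have "c \<le> \<tau>" using cSup_upper[OF \<open>c \<in> S\<close> \<open>bdd_above S\<close>] by (simp add: \<tau>_def)
    ultimately have "osc_partition f e a \<tau> (insert \<tau> B)" using extend \<open>max l a < c\<close> by blast
    then show ?thesis using \<open>a \<le> \<tau>\<close> \<open>\<tau> \<le> b\<close> by (auto simp: S_def)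
  qed
  have "\<tau> = b"
  proof (rule ccontr)
    assume "\<tau> \<noteq> b"
    obtain B where "osc_partition f e a \<tau> B" using \<open>\<tau> \<in> S\<close> unfolding S_def by blast
    then obtain d where "\<tau> < d" "d \<le> b" "osc_partition f e a d (insert d B)"
      using osc_partition_extend_right[OF assms(1) _ _ \<open>e > 0\<close>] \<open>a \<le> \<tau>\<close> \<open>\<tau> \<le> b\<close> \<open>\<tau> \<noteq> b\<close> by force
    then have "d \<in> S" using \<open>a \<le> \<tau>\<close> by (auto simp: S_def)
    then show False using cSup_upper[OF _ \<open>bdd_above S\<close>] \<open>\<tau> < d\<close> by (force simp: \<tau>_def)
  qed
  then show thesis using \<open>\<tau> \<in> S\<close> that by (auto simp: S_def)
qed

lemma osc_partition_left_lim_prv_le: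
  assumes "cadlag_on a b f" "osc_partition f e a b B" "is_partition a b P" "B \<subseteq> P"
    and "u \<in> P" "u \<noteq> a"
  shows "norm (left_lim f u - f (prv P u)) \<le> e"
proof (rule tendsto_upperbound)
  have "prv P u \<in> P" "prv P u < u" using prv_mem prv_less assms(3,5,6) by auto
  then have "a \<le> prv P u" "u \<in> {a<..b}" using assms(3,5) unfolding is_partition_def by auto
  have "norm (f r - f (prv P u)) < e" if "prv P u \<le> r" "r < u" for r
  proof -
    have "{prv P u<..r} \<inter> B = {}"
      using prv_greatest[OF assms(3,5,6)] assms(4) that by fastforce
    then show ?thesis
      using assms(2) that \<open>a \<le> prv P u\<close> \<open>u \<in> {a<..b}\<close> unfolding osc_partition_def by auto
  qed
  then show "\<forall>\<^sub>F r in at_left u. norm (f r - f (prv P u)) \<le> e"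
    unfolding eventually_at_left_field using \<open>prv P u < u\<close> by (auto intro!: exI[of _ "prv P u"] less_imp_le)
  show "((\<lambda>r. norm (f r - f (prv P u))) \<longlongrightarrow> norm (left_lim f u - f (prv P u))) (at_left u)"
    using cadlag_tendsto_left_lim[OF assms(1) \<open>u \<in> {a<..b}\<close>] by (intro tendsto_intros)
qed simp

lemma osc_partition_jump_le:
  assumes "cadlag_on a b f" "osc_partition f e a b B" "u \<in> {a<..b}" "u \<notin> B"
  shows "norm (jump f u) \<le> 2 * e"
proof -
  define P where "P = insert u B"
  have P: "is_partition a b P" "B \<subseteq> P" "u \<in> P" "u \<noteq> a"
    using assms(2,3) unfolding P_def osc_partition_def is_partition_def by auto
  have "prv P u < u" "a \<le> prv P u"
    using prv_less[OF P(1,3,4)] prv_mem[OF P(1,3,4)] P(1) unfolding is_partition_def by auto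
  have "{prv P u<..u} \<inter> B = {}"
    using prv_greatest[OF P(1,3,4)] assms(4) P(2) by fastforce
  then have "norm (f u - f (prv P u)) < e"
    using assms(2,3) \<open>prv P u < u\<close> \<open>a \<le> prv P u\<close> unfolding osc_partition_def by auto
  moreover have "norm (left_lim f u - f (prv P u)) \<le> e"
    by (rule osc_partition_left_lim_prv_le[OF assms(1,2) P])
  ultimately show ?thesis
    using norm_triangle_ineq4[of "f u - f (prv P u)" "left_lim f u - f (prv P u)"] by simp
qed

lemma osc_partition_big_jumps_subset:
  assumes "cadlag_on a b f" "osc_partition f (\<theta> / 2) a b B"
  shows "{t \<in> {a<..b}. \<theta> < norm (jump f t)} \<subseteq> B"
  using osc_partition_jump_le[OF assms] by force

lemma cadlag_finite_big_jumps:
  assumes "cadlag_on a b f" "a \<le> b" "\<theta> > 0"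
  shows "finite {t \<in> {a<..b}. \<theta> < norm (jump f t)}"
proof -
  have "\<theta> / 2 > 0" using assms(3) by simp
  then obtain B where B: "osc_partition f (\<theta> / 2) a b B"
    using cadlag_osc_partition_exists[OF assms(1,2)] by blast
  then have "finite B" unfolding osc_partition_def is_partition_def by auto
  then show ?thesis using osc_partition_big_jumps_subset[OF assms(1) B] by (rule finite_subset[rotated])
qed

lemma powr_add_le:
  fixes x e p :: real
  assumes "0 \<le> x" "0 \<le> e" "e \<le> 1" "1 \<le> p"
  shows "(x + e) powr p \<le> 2 powr p * (x powr p + e)"
proof -
  have "e powr p \<le> e powr 1" using assms by (intro powr_mono') auto
  then have "e powr p \<le> e" using assms by (cases "e = 0") auto
  then have "max x e powr p \<le> x powr p + e"
    using assms by (cases "x \<le> e") (auto simp: max_def add_increasing)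
  have "(x + e) powr p \<le> (2 * max x e) powr p" using assms by (intro powr_mono2) auto
  also have "\<dots> = 2 powr p * max x e powr p" using assms by (simp add: powr_mult)
  also have "\<dots> \<le> 2 powr p * (x powr p + e)"
    using \<open>max x e powr p \<le> x powr p + e\<close> by (intro mult_left_mono) auto
  finally show ?thesis .
qed

lemma ex_pos_mult_powr_less:
  fixes K r e :: real
  assumes "0 < r" "0 < e"
  obtains \<eta> where "0 < \<eta>" "K * \<eta> powr r < e"
proof -
  have "((\<lambda>\<eta>. K * \<eta> powr r) \<longlongrightarrow> K * 0) (at_right 0)"
    using assms(1) eventually_at_right_less[of "0::real"]
    by (intro tendsto_mult tendsto_const tendsto_zero_powrI) (auto elim: eventually_mono)
  then have "\<forall>\<^sub>F \<eta> in at_right 0. 0 < \<eta> \<and> K * \<eta> powr r < e"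
    using assms(2) by (intro eventually_conj eventually_at_right_less order_tendstoD(2)) auto
  then show thesis using eventually_happens'[OF trivial_limit_at_right_real] that by blast
qed

lemma powr_le_powr_split:
  fixes x c p q :: real
  assumes "0 \<le> x" "x \<le> c" "p \<le> q"
  shows "x powr q \<le> c powr (q - p) * x powr p"
proof -
  have "x powr q = x powr (q - p) * x powr p" by (simp add: powr_add[symmetric])
  also have "\<dots> \<le> c powr (q - p) * x powr p"
    using assms by (intro mult_right_mono powr_mono2) auto
  finally show ?thesis .
qed

locale cadlag_pvar =
  fixes f :: "real \<Rightarrow> 'v::real_normed_vector" and a b p V :: real
  assumes less: "a < b" and p_ge_1: "1 \<le> p" and cadlag: "cadlag_on a b f"
    and pvar_le: "\<And>P. is_partition a b P \<Longrightarrow> psum b P (\<lambda>s t. norm (f t - f s) powr p) \<le> V"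
begin

lemma sum_increments_powr_le:
  assumes "is_partition a b P" "A \<subseteq> P - {a}"
  shows "(\<Sum>u\<in>A. norm (f u - f (prv P u)) powr p) \<le> V"
  using sum_prv_le_psum[OF assms, of "\<lambda>s t. norm (f t - f s) powr p"] pvar_le[OF assms(1)] by simp

lemma pvar_bound_nonneg: "0 \<le> V"
  using sum_increments_powr_le[of "{a, b}" "{}"] less unfolding is_partition_def by simp

lemma sum_jumps_powr_le:
  assumes "finite A" "A \<subseteq> {a<..b}"
  shows "(\<Sum>t\<in>A. norm (jump f t) powr p) \<le> 2 powr p * (V + 1)"
proof -
  define \<epsilon> where "\<epsilon> = 1 / (real (card A) + 1)"
  have "0 < \<epsilon>" "\<epsilon> \<le> 1" "real (card A) * \<epsilon> \<le> 1" by (auto simp: \<epsilon>_def field_simps)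
  have "eventually (\<lambda>r. dist (f r) (left_lim f \<tau>) < \<epsilon>) (at_left \<tau>)" if "\<tau> \<in> A" for \<tau>
    using tendstoD[OF cadlag_tendsto_left_lim[OF cadlag] \<open>0 < \<epsilon>\<close>] that assms(2) by auto
  then obtain S where S: "finite S" "S \<subseteq> {a..b}" and near: "\<And>P \<tau>. is_partition a b P \<Longrightarrow> S \<subseteq> P \<Longrightarrow>
      \<tau> \<in> A \<Longrightarrow> \<tau> \<in> P \<Longrightarrow> dist (f (prv P \<tau>)) (left_lim f \<tau>) < \<epsilon>"
    using eventually_at_left_prv[OF assms, of "\<lambda>\<tau> r. dist (f r) (left_lim f \<tau>) < \<epsilon>"] by blast
  define P where "P = {a, b} \<union> A \<union> S"
  have P: "is_partition a b P" "A \<subseteq> P - {a}"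
    using S assms less unfolding P_def is_partition_def by auto
  have "norm (jump f \<tau>) powr p \<le> 2 powr p * (norm (f \<tau> - f (prv P \<tau>)) powr p + \<epsilon>)" if "\<tau> \<in> A" for \<tau>
  proof -
    have "dist (f (prv P \<tau>)) (left_lim f \<tau>) < \<epsilon>"
      using near[OF P(1) _ that] that by (auto simp: P_def)
    then have "norm (jump f \<tau>) \<le> norm (f \<tau> - f (prv P \<tau>)) + \<epsilon>"
      using norm_triangle_ineq[of "f \<tau> - f (prv P \<tau>)" "f (prv P \<tau>) - left_lim f \<tau>"]
      by (simp add: dist_norm)
    then have "norm (jump f \<tau>) powr p \<le> (norm (f \<tau> - f (prv P \<tau>)) + \<epsilon>) powr p"
      using p_ge_1 by (intro powr_mono2) auto
    also have "\<dots> \<le> 2 powr p * (norm (f \<tau> - f (prv P \<tau>)) powr p + \<epsilon>)"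
      using \<open>0 < \<epsilon>\<close> \<open>\<epsilon> \<le> 1\<close> p_ge_1 by (intro powr_add_le) auto
    finally show ?thesis .
  qed
  then have "(\<Sum>t\<in>A. norm (jump f t) powr p) \<le> (\<Sum>t\<in>A. 2 powr p * (norm (f t - f (prv P t)) powr p + \<epsilon>))"
    by (rule sum_mono)
  also have "\<dots> = 2 powr p * ((\<Sum>t\<in>A. norm (f t - f (prv P t)) powr p) + real (card A) * \<epsilon>)"
    by (simp add: sum_distrib_left[symmetric] sum.distrib)
  also have "\<dots> \<le> 2 powr p * (V + 1)"
    using sum_increments_powr_le[OF P] \<open>real (card A) * \<epsilon> \<le> 1\<close> by (intro mult_left_mono) auto
  finally show ?thesis .
qed

end

locale cadlag_pvar_remainder = cadlag_pvar f a b p V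
  for f :: "real \<Rightarrow> 'v::real_normed_vector" and a b p V +
  fixes R :: "'v \<Rightarrow> 'v \<Rightarrow> 'u::banach" and q C :: real
  assumes p_less_q: "p < q" and C_nonneg: "0 \<le> C"
    and R_le: "\<And>x y. norm (R x y) \<le> C * norm (y - x) powr q"
    and R_isCont: "\<And>x y. isCont (\<lambda>x. R x y) x"
begin

lemma R_le_small:
  assumes "norm (y - x) \<le> \<theta>"
  shows "norm (R x y) \<le> C * \<theta> powr (q - p) * norm (y - x) powr p"
proof -
  have "norm (R x y) \<le> C * norm (y - x) powr q" by (rule R_le)
  also have "\<dots> \<le> C * (\<theta> powr (q - p) * norm (y - x) powr p)"
    using assms p_less_q C_nonneg by (intro mult_left_mono powr_le_powr_split) auto
  finally show ?thesis by (simp add: mult.assoc)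
qed

lemma sum_small_jump_remainders_le:
  assumes "finite A" "A \<subseteq> {a<..b}" "\<And>t. t \<in> A \<Longrightarrow> norm (jump f t) \<le> \<theta>"
  shows "(\<Sum>t\<in>A. norm (R (left_lim f t) (f t))) \<le> C * \<theta> powr (q - p) * (2 powr p * (V + 1))"
proof -
  have "(\<Sum>t\<in>A. norm (R (left_lim f t) (f t))) \<le> (\<Sum>t\<in>A. C * \<theta> powr (q - p) * norm (jump f t) powr p)"
    using assms(3) by (intro sum_mono R_le_small) auto
  also have "\<dots> = C * \<theta> powr (q - p) * (\<Sum>t\<in>A. norm (jump f t) powr p)"
    by (simp add: sum_distrib_left)
  also have "\<dots> \<le> C * \<theta> powr (q - p) * (2 powr p * (V + 1))"
    using C_nonneg by (intro mult_left_mono sum_jumps_powr_le assms(1,2)) auto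
  finally show ?thesis .
qed

lemma jump_remainders_abs_summable: "(\<lambda>t. R (left_lim f t) (f t)) abs_summable_on {a<..b}"
proof -
  define G where "G = {t \<in> {a<..b}. 1 < norm (jump f t)}"
  have "finite G" unfolding G_def using cadlag_finite_big_jumps[OF cadlag] less by auto
  have "(\<Sum>t\<in>A. norm (R (left_lim f t) (f t)))
      \<le> (\<Sum>t\<in>G. norm (R (left_lim f t) (f t))) + C * 1 powr (q - p) * (2 powr p * (V + 1))"
    if "finite A" "A \<subseteq> {a<..b}" for A
  proof -
    have "(\<Sum>t\<in>A. norm (R (left_lim f t) (f t)))
        = (\<Sum>t\<in>A \<inter> G. norm (R (left_lim f t) (f t))) + (\<Sum>t\<in>A - G. norm (R (left_lim f t) (f t)))"
      using that by (metis sum.Int_Diff)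
    also have "(\<Sum>t\<in>A \<inter> G. norm (R (left_lim f t) (f t))) \<le> (\<Sum>t\<in>G. norm (R (left_lim f t) (f t)))"
      using \<open>finite G\<close> by (intro sum_mono2) auto
    also have "(\<Sum>t\<in>A - G. norm (R (left_lim f t) (f t))) \<le> C * 1 powr (q - p) * (2 powr p * (V + 1))"
      using that by (intro sum_small_jump_remainders_le) (auto simp: G_def)
    finally show ?thesis by simp
  qed
  then show ?thesis by (intro nonneg_bdd_above_summable_on bdd_aboveI2) auto
qed

lemma small_jump_remainders_infsum_le:
  "norm (\<Sum>\<^sub>\<infinity>t\<in>{t \<in> {a<..b}. norm (jump f t) \<le> \<theta>}. R (left_lim f t) (f t))
     \<le> C * \<theta> powr (q - p) * (2 powr p * (V + 1))"
proof -
  let ?S = "{t \<in> {a<..b}. norm (jump f t) \<le> \<theta>}"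
  have summable: "(\<lambda>t. R (left_lim f t) (f t)) abs_summable_on ?S"
    by (rule summable_on_subset_banach[OF jump_remainders_abs_summable]) auto
  have "norm (\<Sum>\<^sub>\<infinity>t\<in>?S. R (left_lim f t) (f t)) \<le> (\<Sum>\<^sub>\<infinity>t\<in>?S. norm (R (left_lim f t) (f t)))"
    by (rule norm_infsum_bound[OF summable])
  also have "\<dots> \<le> C * \<theta> powr (q - p) * (2 powr p * (V + 1))"
    by (rule infsum_le_finite_sums[OF summable], rule sum_small_jump_remainders_le) auto
  finally show ?thesis .
qed

lemma small_increment_remainders_le:
  assumes "osc_partition f (\<theta> / 2) a b B" "is_partition a b P" "B \<subseteq> P"
  shows "norm (\<Sum>u\<in>{u \<in> P - {a}. norm (jump f u) \<le> \<theta>}. R (f (prv P u)) (f u))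
    \<le> C * (2 * \<theta>) powr (q - p) * V"
proof -
  let ?Small = "{u \<in> P - {a}. norm (jump f u) \<le> \<theta>}"
  have "norm (f u - f (prv P u)) \<le> 2 * \<theta>" if "u \<in> ?Small" for u
  proof -
    have "norm (left_lim f u - f (prv P u)) \<le> \<theta> / 2"
      using osc_partition_left_lim_prv_le[OF cadlag assms] that by auto
    moreover have "norm (jump f u) \<le> \<theta>" using that by simp
    moreover have "norm (f u - f (prv P u)) \<le> norm (jump f u) + norm (left_lim f u - f (prv P u))"
      using norm_triangle_ineq[of "jump f u" "left_lim f u - f (prv P u)"] by simp
    ultimately show ?thesis using norm_ge_zero[of "jump f u"] by linarith
  qed
  then have "norm (\<Sum>u\<in>?Small. R (f (prv P u)) (f u))
      \<le> (\<Sum>u\<in>?Small. C * (2 * \<theta>) powr (q - p) * norm (f u - f (prv P u)) powr p)"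
    by (intro sum_norm_le R_le_small) auto
  also have "\<dots> = C * (2 * \<theta>) powr (q - p) * (\<Sum>u\<in>?Small. norm (f u - f (prv P u)) powr p)"
    by (simp add: sum_distrib_left)
  also have "\<dots> \<le> C * (2 * \<theta>) powr (q - p) * V"
    using sum_increments_powr_le[OF assms(2), of ?Small] C_nonneg by (intro mult_left_mono) auto
  finally show ?thesis .
qed

lemma big_jump_remainders_approx:
  assumes "finite A" "A \<subseteq> {a<..b}" "e > 0"
  obtains S where "finite S" "S \<subseteq> {a..b}"
    "\<And>P. is_partition a b P \<Longrightarrow> A \<union> S \<subseteq> P \<Longrightarrow>
       norm (\<Sum>u\<in>A. R (f (prv P u)) (f u) - R (left_lim f u) (f u)) \<le> e"
proof -
  define e' where "e' = e / (real (card A) + 1)"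
  have "e' > 0" using \<open>e > 0\<close> by (simp add: e'_def)
  have "eventually (\<lambda>r. dist (R (f r) (f \<tau>)) (R (left_lim f \<tau>) (f \<tau>)) < e') (at_left \<tau>)"
    if "\<tau> \<in> A" for \<tau>
    using that assms(2)
    by (intro tendstoD[OF isCont_tendsto_compose[OF R_isCont cadlag_tendsto_left_lim[OF cadlag]] \<open>e' > 0\<close>])
      auto
  then obtain S where S: "finite S" "S \<subseteq> {a..b}" and near: "\<And>P \<tau>. is_partition a b P \<Longrightarrow> S \<subseteq> P \<Longrightarrow>
      \<tau> \<in> A \<Longrightarrow> \<tau> \<in> P \<Longrightarrow> dist (R (f (prv P \<tau>)) (f \<tau>)) (R (left_lim f \<tau>) (f \<tau>)) < e'"
    using eventually_at_left_prv[OF assms(1,2), of "\<lambda>\<tau> r. dist (R (f r) (f \<tau>)) (R (left_lim f \<tau>) (f \<tau>)) < e'"]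
    by blast
  show thesis
  proof (rule that[OF S])
    fix P assume P: "is_partition a b P" "A \<union> S \<subseteq> P"
    have "norm (\<Sum>u\<in>A. R (f (prv P u)) (f u) - R (left_lim f u) (f u)) \<le> (\<Sum>u\<in>A. e')"
      using near[OF P(1)] P(2) by (intro sum_norm_le) (auto simp: dist_norm less_imp_le)
    also have "\<dots> \<le> e"
      using \<open>e > 0\<close> by (simp add: e'_def field_simps)
    finally show "norm (\<Sum>u\<in>A. R (f (prv P u)) (f u) - R (left_lim f u) (f u)) \<le> e" .
  qed
qed

lemma psum_remainders_minus_infsum_le:
  fixes \<theta> :: real
  defines "A \<equiv> {t \<in> {a<..b}. \<theta> < norm (jump f t)}"
  assumes P: "is_partition a b P" and AP: "A \<subseteq> P"
  shows "norm (psum b P (\<lambda>s t. R (f s) (f t)) - (\<Sum>\<^sub>\<infinity>t\<in>{a<..b}. R (left_lim f t) (f t)))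
    \<le> norm (\<Sum>u\<in>A. R (f (prv P u)) (f u) - R (left_lim f u) (f u))
      + norm (\<Sum>u\<in>{u \<in> P - {a}. norm (jump f u) \<le> \<theta>}. R (f (prv P u)) (f u))
      + norm (\<Sum>\<^sub>\<infinity>t\<in>{t \<in> {a<..b}. norm (jump f t) \<le> \<theta>}. R (left_lim f t) (f t))"
proof -
  define g where "g = (\<lambda>u. R (f (prv P u)) (f u))"
  define J where "J = (\<lambda>t. R (left_lim f t) (f t))"
  define Small where "Small = {u \<in> P - {a}. norm (jump f u) \<le> \<theta>}"
  define Small_jumps where "Small_jumps = {t \<in> {a<..b}. norm (jump f t) \<le> \<theta>}"
  have "finite P" "P \<subseteq> {a..b}" using P unfolding is_partition_def by auto
  then have "finite A" using AP finite_subset by blast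
  have "P - {a} = A \<union> Small" "A \<inter> Small = {}"
    using AP \<open>P \<subseteq> {a..b}\<close> unfolding A_def Small_def by auto
  moreover have "finite Small" using \<open>finite P\<close> by (simp add: Small_def)
  ultimately have "psum b P (\<lambda>s t. R (f s) (f t)) = sum g A + sum g Small"
    using \<open>finite A\<close> unfolding psum_eq_sum_prv[OF P] g_def by (simp add: sum.union_disjoint)
  moreover have "infsum J {a<..b} = sum J A + infsum J Small_jumps"
  proof -
    have "{a<..b} = A \<union> Small_jumps" "A \<inter> Small_jumps = {}"
      unfolding A_def Small_jumps_def by auto
    moreover have "J summable_on Small_jumps"
      unfolding J_def Small_jumps_def
      by (rule abs_summable_summable, rule summable_on_subset_banach[OF jump_remainders_abs_summable]) auto
    ultimately show ?thesis
      using \<open>finite A\<close> by (simp add: infsum_Un_disjoint)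
  qed
  ultimately have decomp: "psum b P (\<lambda>s t. R (f s) (f t)) - infsum J {a<..b}
      = (\<Sum>u\<in>A. g u - J u) + sum g Small - infsum J Small_jumps"
    by (simp add: sum_subtractf algebra_simps)
  have "norm (psum b P (\<lambda>s t. R (f s) (f t)) - infsum J {a<..b})
      \<le> norm ((\<Sum>u\<in>A. g u - J u) + sum g Small) + norm (infsum J Small_jumps)"
    unfolding decomp by (rule norm_triangle_ineq4)
  also have "\<dots> \<le> norm (\<Sum>u\<in>A. g u - J u) + norm (sum g Small) + norm (infsum J Small_jumps)"
    using norm_triangle_ineq by (intro add_right_mono)
  finally show ?thesis unfolding g_def J_def Small_def Small_jumps_def .
qed

theorem rrs_converges_remainder_psum:
  "rrs_converges a b (\<lambda>P. psum b P (\<lambda>s t. R (f s) (f t))) (\<Sum>\<^sub>\<infinity>t\<in>{a<..b}. R (left_lim f t) (f t))"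
  unfolding rrs_converges_def
proof (intro allI impI)
  fix \<epsilon> :: real assume "\<epsilon> > 0"
  define K where "K = C * (V + 2 powr p * (V + 1))"
  obtain \<eta> where "0 < \<eta>" and \<eta>: "K * \<eta> powr (q - p) < \<epsilon> / 2"
    using ex_pos_mult_powr_less[of "q - p" "\<epsilon> / 2" K] p_less_q \<open>\<epsilon> > 0\<close> by auto
  define \<theta> where "\<theta> = \<eta> / 2"
  have "0 < \<theta>" and \<theta>: "K * (2 * \<theta>) powr (q - p) < \<epsilon> / 2"
    using \<open>0 < \<eta>\<close> \<eta> by (simp_all add: \<theta>_def)
  then obtain B where B: "osc_partition f (\<theta> / 2) a b B"
    using cadlag_osc_partition_exists[OF cadlag] less by (metis half_gt_zero less_imp_le)
  define A where "A = {t \<in> {a<..b}. \<theta> < norm (jump f t)}"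
  have "A \<subseteq> B" unfolding A_def by (rule osc_partition_big_jumps_subset[OF cadlag B])
  then have "finite A" using B finite_subset unfolding osc_partition_def is_partition_def by blast
  have "A \<subseteq> {a<..b}" unfolding A_def by auto
  obtain S where S: "finite S" "S \<subseteq> {a..b}" and big_jumps: "\<And>P. is_partition a b P \<Longrightarrow> A \<union> S \<subseteq> P \<Longrightarrow>
      norm (\<Sum>u\<in>A. R (f (prv P u)) (f u) - R (left_lim f u) (f u)) \<le> \<epsilon> / 2"
    using big_jump_remainders_approx[OF \<open>finite A\<close> \<open>A \<subseteq> {a<..b}\<close> half_gt_zero[OF \<open>\<epsilon> > 0\<close>]] by blast
  show "\<exists>Pe. is_partition a b Pe \<and> (\<forall>P. is_partition a b P \<and> Pe \<subseteq> P \<longrightarrow>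
      norm (psum b P (\<lambda>s t. R (f s) (f t)) - (\<Sum>\<^sub>\<infinity>t\<in>{a<..b}. R (left_lim f t) (f t))) < \<epsilon>)"
  proof (intro exI[of _ "B \<union> S"] conjI allI impI)
    show "is_partition a b (B \<union> S)" using B S unfolding osc_partition_def is_partition_def by auto
    fix P assume "is_partition a b P \<and> B \<union> S \<subseteq> P"
    then have P: "is_partition a b P" "B \<subseteq> P" "A \<union> S \<subseteq> P" "A \<subseteq> P" using \<open>A \<subseteq> B\<close> by auto
    have "\<theta> powr (q - p) \<le> (2 * \<theta>) powr (q - p)"
      using \<open>0 < \<theta>\<close> p_less_q by (intro powr_mono2) auto
    then have "C * \<theta> powr (q - p) * (2 powr p * (V + 1)) \<le> C * (2 * \<theta>) powr (q - p) * (2 powr p * (V + 1))"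
      using C_nonneg pvar_bound_nonneg by (intro mult_right_mono mult_left_mono) auto
    then have "norm (psum b P (\<lambda>s t. R (f s) (f t)) - (\<Sum>\<^sub>\<infinity>t\<in>{a<..b}. R (left_lim f t) (f t)))
        \<le> \<epsilon> / 2 + C * (2 * \<theta>) powr (q - p) * V + C * (2 * \<theta>) powr (q - p) * (2 powr p * (V + 1))"
      using psum_remainders_minus_infsum_le[OF P(1) P(4)[unfolded A_def]] big_jumps[OF P(1,3)]
        small_increment_remainders_le[OF B P(1,2)] small_jump_remainders_infsum_le[of \<theta>]
      unfolding A_def by linarith
    also have "\<dots> = \<epsilon> / 2 + K * (2 * \<theta>) powr (q - p)" by (simp add: K_def algebra_simps)
    also have "\<dots> < \<epsilon>" using \<theta> by simp
    finally show "norm (psum b P (\<lambda>s t. R (f s) (f t)) - (\<Sum>\<^sub>\<infinity>t\<in>{a<..b}. R (left_lim f t) (f t))) < \<epsilon>" .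
  qed
qed

end

lemma psum_taylor_incr_eq:
  fixes F :: "'v::real_normed_vector \<Rightarrow> 'u::real_normed_vector"
  assumes "is_partition a b P"
  shows "psum b P (\<lambda>s t. taylor_incr n F (f s) (f t - f s))
    = F (f b) - F (f a) - psum b P (\<lambda>s t. taylor_rem n F (f s) (f t))"
proof -
  have "psum b P (\<lambda>s t. taylor_incr n F (f s) (f t - f s))
      = psum b P (\<lambda>s t. F (f t) - F (f s)) - psum b P (\<lambda>s t. taylor_rem n F (f s) (f t))"
    unfolding psum_def taylor_rem_def by (simp add: sum_subtractf[symmetric])
  then show ?thesis using psum_telescope[OF assms, of "\<lambda>t. F (f t)"] by simp
qed

lemma rrs_converges_const_minus:
  assumes "rrs_converges a b S K" and "\<And>P. is_partition a b P \<Longrightarrow> S' P = c - S P"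
  shows "rrs_converges a b S' (c - K)"
  using assms unfolding rrs_converges_def by (simp add: norm_minus_commute)

theorem proposition4p1:
  fixes M :: "'a measure" and X :: "real \<Rightarrow> 'a \<Rightarrow> 'v::banach"
    and F :: "'v \<Rightarrow> 'u::banach" and T p :: real
  assumes "prob_space M"
    and "T > 0"
    and "p \<ge> 1"
    and "\<forall>t\<in>{0..T}. (\<lambda>\<omega>. X t \<omega>) \<in> borel_measurable M"
    and "\<forall>\<omega>\<in>space M. cadlag_on 0 T (\<lambda>t. X t \<omega>)"
    and "AE \<omega> in M. finite_p_var p 0 T (\<lambda>t. X t \<omega>)"
    and "Cb (nat \<lfloor>p\<rfloor> + 1) F"
  shows "AE \<omega> in M. \<exists>K.
     rrs_converges 0 T
       (\<lambda>P. psum T P (\<lambda>s t. taylor_incr (nat \<lfloor>p\<rfloor>) F (X s \<omega>) (X t \<omega> - X s \<omega>))) K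
   \<and> (\<lambda>t. F (X t \<omega>) - F (left_lim (\<lambda>u. X u \<omega>) t)
          - taylor_incr (nat \<lfloor>p\<rfloor>) F (left_lim (\<lambda>u. X u \<omega>) t)
                (X t \<omega> - left_lim (\<lambda>u. X u \<omega>) t)) abs_summable_on {0<..T}
   \<and> F (X T \<omega>) - F (X 0 \<omega>) = K +
       (\<Sum>\<^sub>\<infinity>t\<in>{0<..T}. F (X t \<omega>) - F (left_lim (\<lambda>u. X u \<omega>) t)
          - taylor_incr (nat \<lfloor>p\<rfloor>) F (left_lim (\<lambda>u. X u \<omega>) t)
                (X t \<omega> - left_lim (\<lambda>u. X u \<omega>) t))"
proof -
  define n where "n = nat \<lfloor>p\<rfloor>"
  have F: "Cb (Suc n) F" using assms(7) by (simp add: n_def)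
  obtain C where "0 \<le> C" and rem_le: "\<And>x y. norm (taylor_rem n F x y) \<le> C * norm (y - x) powr Suc n"
    using Cb_taylor_rem_le[OF F] by blast
  have "p < Suc n" using assms(3) unfolding n_def by linarith
  show ?thesis
    using assms(6) AE_space
  proof eventually_elim
    case (elim \<omega>)
    then obtain V where "\<And>P. is_partition 0 T P \<Longrightarrow> psum T P (\<lambda>s t. norm (X t \<omega> - X s \<omega>) powr p) \<le> V"
      unfolding finite_p_var_def bdd_above_def by blast
    then interpret cadlag_pvar_remainder "\<lambda>t. X t \<omega>" 0 T p V "taylor_rem n F" "Suc n" C
      using assms(2,3,5) elim \<open>0 \<le> C\<close> rem_le \<open>p < Suc n\<close> Cb_taylor_rem_isCont[OF F]
      by unfold_locales auto
    have "rrs_converges 0 T (\<lambda>P. psum T P (\<lambda>s t. taylor_incr n F (X s \<omega>) (X t \<omega> - X s \<omega>)))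
        (F (X T \<omega>) - F (X 0 \<omega>) - (\<Sum>\<^sub>\<infinity>t\<in>{0<..T}. taylor_rem n F (left_lim (\<lambda>u. X u \<omega>) t) (X t \<omega>)))"
      using rrs_converges_remainder_psum psum_taylor_incr_eq by (rule rrs_converges_const_minus)
    moreover note jump_remainders_abs_summable
    ultimately show ?case
      unfolding n_def[symmetric] taylor_rem_def by (intro exI conjI) (assumption+, simp)
  qed
qed

end
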